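(* Let $\Delta$ be a finite set with $|\Delta|\ge2$, $\ell\ge2$, $\Omega=\Delta^\ell$, $W=\mathrm{Sym}\,\Delta\wr S_\ell$ in product action on $\Omega$, $G\le W$, and let $M$ be a minimal normal subgroup of $G$ transitive on $\Omega$, $M=T_1\times\cdots\times T_k$ with the $T_i$ isomorphic finite simple groups. Let $\Gamma$ be a connected graph with vertex set $\Omega$ with $G\le\mathrm{Aut}\,\Gamma$. Suppose $M$ is not regular on $\Omega$ and the inclusion $G\le W$ is normal. Then $\Gamma$ is not $(G,2)$-arc-transitive.
   Context: Product action: $(\delta_1,\dots,\delta_\ell)^{(g_1,\dots,g_\ell)h}=(\delta_{1h^{-1}}g_{1h^{-1}},\dots,\delta_{\ell h^{-1}}g_{\ell h^{-1}})$. Let $\pi:W\to S_\ell$ be the natural projection, $W_j$ the stabiliser of $j$ under $\pi$, $W_j=\mathrm{Sym}\,\Delta\times(\mathrm{Sym}\,\Delta\wr S_{\ell-1})$ with the first factor on the $j$-th coordinate; the component $M^{(j)}$ is the projection of $M\cap W_j$ onto the first factor, identified (for non-abelian $M$) with the product of those $T_i$ not in the kernel of $M\to M^{(j)}$. The inclusion $G\le W$ is normal if $M$ is non-abelian and each $T_i$ lies in exactly one $M^{(j)}$ (equivalently $M=\prod_jM^{(j)}$). $\Gamma$ is $(G,2)$-arc-transitive if $G$ is transitive on sequences $(v_0,v_1,v_2)$ of vertices with $v_0\sim v_1\sim v_2$ and $v_0\ne v_2$. *)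

theory Defs
  imports "HOL-Algebra.Algebra" "HOL-Combinatorics.Permutations"
begin

text \<open>The set \<Omega> = \<Delta>^\<ell>, points are extensional functions on {..<\<ell>} (coordinates 0..\<ell>-1).\<close>
definition Omega :: "'a set \<Rightarrow> nat \<Rightarrow> (nat \<Rightarrow> 'a) set" where
  "Omega D l = (\<Pi>\<^sub>E i\<in>{..<l}. D)"

definition Sub :: "'b set \<Rightarrow> ('b \<Rightarrow> 'b) set \<Rightarrow> ('b \<Rightarrow> 'b) monoid" where
  "Sub S Y = BijGroup S \<lparr>carrier := Y\<rparr>"

text \<open>The permutation of \<Omega> given by the wreath element (g_1,...,g_l)h in product action:
  the i-th coordinate of the image is g_{i h^-1} applied to the (i h^-1)-th coordinate.\<close>
definition wr_elem :: "'a set \<Rightarrow> nat \<Rightarrow> (nat \<Rightarrow> 'a \<Rightarrow> 'a) \<Rightarrow> (nat \<Rightarrow> nat)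
    \<Rightarrow> (nat \<Rightarrow> 'a) \<Rightarrow> (nat \<Rightarrow> 'a)" where
  "wr_elem D l g h = (\<lambda>w\<in>Omega D l. \<lambda>i\<in>{..<l}. g (inv_into UNIV h i) (w (inv_into UNIV h i)))"

definition wr_data :: "'a set \<Rightarrow> nat \<Rightarrow> (nat \<Rightarrow> 'a \<Rightarrow> 'a) \<Rightarrow> (nat \<Rightarrow> nat) \<Rightarrow> bool" where
  "wr_data D l g h \<longleftrightarrow> (\<forall>i<l. bij_betw (g i) D D) \<and> h permutes {..<l}"

definition Wr :: "'a set \<Rightarrow> nat \<Rightarrow> ((nat \<Rightarrow> 'a) \<Rightarrow> (nat \<Rightarrow> 'a)) set" where
  "Wr D l = {wr_elem D l g h | g h. wr_data D l g h}"

definition Wr_stab :: "'a set \<Rightarrow> nat \<Rightarrow> nat \<Rightarrow> ((nat \<Rightarrow> 'a) \<Rightarrow> (nat \<Rightarrow> 'a)) set" where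
  "Wr_stab D l j = {wr_elem D l g h | g h. wr_data D l g h \<and> h j = j}"

definition component :: "'a set \<Rightarrow> nat \<Rightarrow> ((nat \<Rightarrow> 'a) \<Rightarrow> (nat \<Rightarrow> 'a)) set \<Rightarrow> nat
    \<Rightarrow> ('a \<Rightarrow> 'a) set" where
  "component D l M j = {restrict (g j) D | g h. wr_data D l g h \<and> h j = j \<and> wr_elem D l g h \<in> M}"

definition prod_components :: "'a set \<Rightarrow> nat \<Rightarrow> ((nat \<Rightarrow> 'a) \<Rightarrow> (nat \<Rightarrow> 'a)) set
    \<Rightarrow> ((nat \<Rightarrow> 'a) \<Rightarrow> (nat \<Rightarrow> 'a)) set" where
  "prod_components D l M = {wr_elem D l g id | g. \<forall>j<l. restrict (g j) D \<in> component D l M j}"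

definition nonabelian :: "('b \<Rightarrow> 'b) set \<Rightarrow> 'b set \<Rightarrow> bool" where
  "nonabelian M S \<longleftrightarrow> (\<exists>x\<in>M. \<exists>y\<in>M. compose S x y \<noteq> compose S y x)"

definition normal_inclusion :: "'a set \<Rightarrow> nat \<Rightarrow> ((nat \<Rightarrow> 'a) \<Rightarrow> (nat \<Rightarrow> 'a)) set \<Rightarrow> bool" where
  "normal_inclusion D l M \<longleftrightarrow> nonabelian M (Omega D l) \<and> M = prod_components D l M"

definition minimal_normal :: "('b \<Rightarrow> 'b) set \<Rightarrow> ('b \<Rightarrow> 'b) set \<Rightarrow> 'b set \<Rightarrow> bool" where
  "minimal_normal M G S \<longleftrightarrow> M \<lhd> Sub S G \<and> M \<noteq> {\<one>\<^bsub>BijGroup S\<^esub>} \<and>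
     (\<forall>N. N \<lhd> Sub S G \<and> N \<subseteq> M \<longrightarrow> N = {\<one>\<^bsub>BijGroup S\<^esub>} \<or> N = M)"

definition internal_direct_product :: "'b set \<Rightarrow> ('b \<Rightarrow> 'b) set \<Rightarrow> nat \<Rightarrow> (nat \<Rightarrow> ('b \<Rightarrow> 'b) set) \<Rightarrow> bool" where
  "internal_direct_product S M k T \<longleftrightarrow>
     (\<exists>\<phi>. \<phi> \<in> iso (product_group {..<k} (\<lambda>i. Sub S (T i))) (Sub S M) \<and>
        (\<forall>i<k. \<forall>t\<in>(\<Pi>\<^sub>E j\<in>{..<k}. T j). (\<forall>j<k. j \<noteq> i \<longrightarrow> t j = \<one>\<^bsub>BijGroup S\<^esub>) \<longrightarrow> \<phi> t = t i))"

definition transitive_on :: "('b \<Rightarrow> 'b) set \<Rightarrow> 'b set \<Rightarrow> bool" where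
  "transitive_on M S \<longleftrightarrow> (\<forall>x\<in>S. \<forall>y\<in>S. \<exists>m\<in>M. m x = y)"

definition regular_on :: "('b \<Rightarrow> 'b) set \<Rightarrow> 'b set \<Rightarrow> bool" where
  "regular_on M S \<longleftrightarrow> transitive_on M S \<and>
     (\<forall>m\<in>M. \<forall>x\<in>S. m x = x \<longrightarrow> m = \<one>\<^bsub>BijGroup S\<^esub>)"

definition simple_graph :: "'b set \<Rightarrow> ('b \<Rightarrow> 'b \<Rightarrow> bool) \<Rightarrow> bool" where
  "simple_graph V E \<longleftrightarrow> (\<forall>x y. E x y \<longrightarrow> x \<in> V \<and> y \<in> V) \<and> (\<forall>x y. E x y \<longrightarrow> E y x) \<and> (\<forall>x. \<not> E x x)"

definition connected_graph :: "'b set \<Rightarrow> ('b \<Rightarrow> 'b \<Rightarrow> bool) \<Rightarrow> bool" where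
  "connected_graph V E \<longleftrightarrow> (\<forall>x\<in>V. \<forall>y\<in>V. (\<lambda>a b. E a b)\<^sup>*\<^sup>* x y)"

definition automorphisms_of :: "('b \<Rightarrow> 'b) set \<Rightarrow> 'b set \<Rightarrow> ('b \<Rightarrow> 'b \<Rightarrow> bool) \<Rightarrow> bool" where
  "automorphisms_of G V E \<longleftrightarrow> (\<forall>g\<in>G. \<forall>x\<in>V. \<forall>y\<in>V. E (g x) (g y) \<longleftrightarrow> E x y)"

definition two_arcs :: "'b set \<Rightarrow> ('b \<Rightarrow> 'b \<Rightarrow> bool) \<Rightarrow> ('b \<times> 'b \<times> 'b) set" where
  "two_arcs V E = {(v0, v1, v2). v0 \<in> V \<and> v1 \<in> V \<and> v2 \<in> V \<and> E v0 v1 \<and> E v1 v2 \<and> v0 \<noteq> v2}"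

definition two_arc_transitive :: "('b \<Rightarrow> 'b) set \<Rightarrow> 'b set \<Rightarrow> ('b \<Rightarrow> 'b \<Rightarrow> bool) \<Rightarrow> bool" where
  "two_arc_transitive G V E \<longleftrightarrow>
     (\<forall>a\<in>two_arcs V E. \<forall>b\<in>two_arcs V E. \<exists>g\<in>G.
        (case a of (a0, a1, a2) \<Rightarrow> (g a0, g a1, g a2)) = b)"

end

theory Submission
  imports Defs
begin

text \<open>
  As \<open>M\<close> is not regular and \<open>\<Gamma>\<close> is connected, a point
  stabiliser \<open>M\<^sub>v\<close> moves some neighbour of \<open>v\<close>; since \<open>M = \<Prod>\<^sub>j M\<^sup>(\<^sup>j\<^sup>)\<close> acts coordinatewise,
  keeping only one coordinate of such an element yields two neighbours of \<open>v\<close> at Hamming distance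
  one. As \<open>W\<close> preserves Hamming distance, 2-arc-transitivity puts all neighbours of \<open>v\<close> on one line,
  in a coordinate direction \<open>j(v)\<close>. The subgroups of \<open>M\<^sub>v\<close> supported on a single coordinate
  \<open>i \<noteq> j(v)\<close> grow along edges and have constant order, so they coincide at the ends of an edge;
  this forces \<open>j(v) = j(w)\<close> for adjacent \<open>v, w\<close> (otherwise the edge would be a whole component), so
  \<open>j\<close> is constant and those subgroups are trivial. Hence \<open>\<pi>(G)\<close> fixes \<open>j\<close>, and the elements of
  \<open>M\<close> supported on coordinate \<open>j\<close> form a normal subgroup of \<open>G\<close>, nontrivial because \<open>M\<close> is not
  regular and proper because \<open>M\<close> is transitive, contradicting minimality of \<open>M\<close>.
\<close>

lemma Omega_eqI:
  "a \<in> Omega D l \<Longrightarrow> b \<in> Omega D l \<Longrightarrow> (\<And>q. q < l \<Longrightarrow> a q = b q) \<Longrightarrow> a = b"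
  unfolding Omega_def by (auto simp: PiE_def intro: extensionalityI)

lemma Omega_coord: "a \<in> Omega D l \<Longrightarrow> q < l \<Longrightarrow> a q \<in> D"
  unfolding Omega_def by auto

lemma restrict_Omega: "a \<in> Omega D l \<Longrightarrow> (\<lambda>i\<in>{..<l}. a i) = a"
  unfolding Omega_def by (simp add: PiE_def extensional_restrict)

lemma card_Omega: "finite D \<Longrightarrow> card (Omega D l) = card D ^ l"
  unfolding Omega_def by (simp add: card_PiE)

lemma wr_elem_apply:
  "u \<in> Omega D l \<Longrightarrow> q < l \<Longrightarrow> wr_elem D l g h u q = g (inv_into UNIV h q) (u (inv_into UNIV h q))"
  by (simp add: wr_elem_def)

definition hamming_adjacent :: "nat \<Rightarrow> (nat \<Rightarrow> 'a) \<Rightarrow> (nat \<Rightarrow> 'a) \<Rightarrow> bool" where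
  "hamming_adjacent l a b \<longleftrightarrow> (\<exists>i<l. a i \<noteq> b i \<and> (\<forall>p<l. p \<noteq> i \<longrightarrow> a p = b p))"

lemma wr_elem_hamming_adjacent:
  assumes wr: "wr_data D l g h" and a: "a \<in> Omega D l" and b: "b \<in> Omega D l"
    and ab: "hamming_adjacent l a b"
  shows "hamming_adjacent l (wr_elem D l g h a) (wr_elem D l g h b)"
proof -
  have h: "h permutes {..<l}" and g: "\<forall>i<l. bij_betw (g i) D D"
    using wr unfolding wr_data_def by auto
  obtain i where i: "i < l" "a i \<noteq> b i" and off_i: "\<forall>p<l. p \<noteq> i \<longrightarrow> a p = b p"
    using ab unfolding hamming_adjacent_def by blast
  have "h i < l" using permutes_in_image[OF h] i(1) by simp
  moreover have "g i (a i) \<noteq> g i (b i)"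
    using g i Omega_coord[OF a i(1)] Omega_coord[OF b i(1)] by (metis bij_betw_inv_into_left)
  then have "wr_elem D l g h a (h i) \<noteq> wr_elem D l g h b (h i)"
    using calculation wr_elem_apply[OF a] wr_elem_apply[OF b] permutes_inverses(2)[OF h] by simp
  moreover have "wr_elem D l g h a p = wr_elem D l g h b p" if "p < l" "p \<noteq> h i" for p
  proof -
    have "inv_into UNIV h p < l" using permutes_in_image[OF permutes_inv[OF h]] that(1) by simp
    moreover have "inv_into UNIV h p \<noteq> i" using that(2) permutes_inverses(1)[OF h] by metis
    ultimately show ?thesis using off_i wr_elem_apply[OF a that(1)] wr_elem_apply[OF b that(1)] by simp
  qed
  ultimately show ?thesis unfolding hamming_adjacent_def by blast
qed

lemma hamming_adjacent_both:
  assumes "j < l" "a j \<noteq> b j" "\<forall>p<l. p \<noteq> j \<longrightarrow> a p = b p"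
    and "hamming_adjacent l c a" "hamming_adjacent l c b"
    and "i < l" "i \<noteq> j"
  shows "c i = a i"
  using assms unfolding hamming_adjacent_def by metis

lemma Bij_apply: "f \<in> Bij S \<Longrightarrow> u \<in> S \<Longrightarrow> f u \<in> S"
  by (auto simp: Bij_def bij_betw_def)

lemma Bij_apply_eq_iff: "f \<in> Bij S \<Longrightarrow> u \<in> S \<Longrightarrow> v \<in> S \<Longrightarrow> f u = f v \<longleftrightarrow> u = v"
  by (auto simp: Bij_def bij_betw_def inj_on_def)

lemma Bij_inv_into_right: "f \<in> Bij S \<Longrightarrow> u \<in> S \<Longrightarrow> f (inv_into S f u) = u"
  by (auto simp: Bij_def bij_betw_def f_inv_into_f)

definition perm_conj :: "'b set \<Rightarrow> ('b \<Rightarrow> 'b) \<Rightarrow> ('b \<Rightarrow> 'b) \<Rightarrow> ('b \<Rightarrow> 'b)" where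
  "perm_conj S g n = (\<lambda>u\<in>S. g (n (inv_into S g u)))"

lemma perm_conj_apply_image:
  "g \<in> Bij S \<Longrightarrow> u \<in> S \<Longrightarrow> perm_conj S g n (g u) = g (n u)"
  by (auto simp: perm_conj_def Bij_def bij_betw_def inv_into_f_f)

definition moves_only :: "'a set \<Rightarrow> nat \<Rightarrow> nat \<Rightarrow> ((nat \<Rightarrow> 'a) \<Rightarrow> (nat \<Rightarrow> 'a)) \<Rightarrow> bool" where
  "moves_only D l i n \<longleftrightarrow> (\<forall>u\<in>Omega D l. \<forall>p<l. p \<noteq> i \<longrightarrow> n u p = u p)"

lemma perm_conj_moves_only:
  assumes wr: "wr_data D l g' h" and g: "g = wr_elem D l g' h" "g \<in> Bij (Omega D l)"
    and n: "n \<in> Omega D l \<rightarrow> Omega D l" "moves_only D l i n"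
  shows "moves_only D l (h i) (perm_conj (Omega D l) g n)"
  unfolding moves_only_def
proof (intro ballI allI impI)
  fix u p assume u: "u \<in> Omega D l" and p: "p < l" "p \<noteq> h i"
  have hp: "h permutes {..<l}" using wr unfolding wr_data_def by auto
  define z where "z = inv_into (Omega D l) g u"
  have z: "z \<in> Omega D l" unfolding z_def using Bij_inv_into_mem[OF g(2) u] .
  have "inv_into UNIV h p < l" using p(1) permutes_in_image[OF permutes_inv[OF hp]] by simp
  moreover have "inv_into UNIV h p \<noteq> i" using p(2) permutes_inverses(1)[OF hp] by metis
  ultimately have "n z (inv_into UNIV h p) = z (inv_into UNIV h p)" using n(2) z unfolding moves_only_def by blast
  then have "g (n z) p = g z p" using g(1) wr_elem_apply[OF n(1)[THEN funcset_mem, OF z] p(1)]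
      wr_elem_apply[OF z p(1)] by simp
  also have "g z = u" unfolding z_def using Bij_inv_into_right[OF g(2) u] .
  finally show "perm_conj (Omega D l) g n u p = u p" using u by (simp add: perm_conj_def z_def)
qed

lemma connected_graph_induct:
  assumes "connected_graph V E" "x \<in> V" "y \<in> V" "P x" "\<And>u w. P u \<Longrightarrow> E u w \<Longrightarrow> P w"
  shows "P y"
proof -
  have "E\<^sup>*\<^sup>* x y" using assms(1-3) unfolding connected_graph_def by blast
  then show ?thesis by induction (use assms(4,5) in blast)+
qed

lemma connected_graph_isolated_edge:
  assumes "connected_graph V E" "v \<in> V" "E v w"
    and "\<forall>c. E v c \<longrightarrow> c = w" "\<forall>c. E w c \<longrightarrow> c = v"
  shows "V \<subseteq> {v, w}"
proof
  fix y assume "y \<in> V"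
  then show "y \<in> {v, w}" by (rule connected_graph_induct[OF assms(1,2)]) (use assms(4,5) in auto)
qed

locale product_action =
  fixes D :: "'a set" and l :: nat and G M :: "((nat \<Rightarrow> 'a) \<Rightarrow> (nat \<Rightarrow> 'a)) set"
  assumes finite_D: "finite D" and card_D: "card D \<ge> 2" and l_ge_2: "l \<ge> 2"
    and G_subgroup: "subgroup G (BijGroup (Omega D l))" and G_wreath: "G \<subseteq> Wr D l"
    and M_minimal_normal: "minimal_normal M G (Omega D l)"
    and M_transitive: "transitive_on M (Omega D l)"
    and M_components: "M = prod_components D l M"
begin

abbreviation "\<Omega> \<equiv> Omega D l"
abbreviation "G_group \<equiv> Sub \<Omega> G"

lemma card_Omega_gt_2: "card \<Omega> > 2"
proof -
  have "2 ^ 2 \<le> card D ^ l"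
    using power_mono[OF card_D, of l] power_increasing[OF l_ge_2, of "2::nat"] by linarith
  then show ?thesis using card_Omega[OF finite_D] by simp
qed

lemma group_G_group: "group G_group"
  unfolding Sub_def by (rule group.subgroup_imp_group[OF group_BijGroup G_subgroup])

lemma M_normal: "M \<lhd> G_group"
  using M_minimal_normal unfolding minimal_normal_def by blast

lemma carrier_G_group [simp]: "carrier G_group = G"
  by (simp add: Sub_def)

lemma G_Bij: "g \<in> G \<Longrightarrow> g \<in> Bij \<Omega>"
  using subgroup.subset[OF G_subgroup] by (auto simp: BijGroup_def)

lemma M_subset_G: "M \<subseteq> G"
  using normal_imp_subgroup[OF M_normal] subgroup.subset by fastforce

lemma M_Bij: "m \<in> M \<Longrightarrow> m \<in> Bij \<Omega>"
  using M_subset_G G_Bij by blast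

lemma mult_G_group: "x \<in> G \<Longrightarrow> y \<in> G \<Longrightarrow> x \<otimes>\<^bsub>G_group\<^esub> y = compose \<Omega> x y"
  using G_Bij by (simp add: Sub_def BijGroup_def)

lemma inv_G_group: "x \<in> G \<Longrightarrow> inv\<^bsub>G_group\<^esub> x = (\<lambda>u\<in>\<Omega>. inv_into \<Omega> x u)"
  by (simp add: Sub_def group.m_inv_consistent[OF group_BijGroup G_subgroup] inv_BijGroup G_Bij)

lemma M_eq_id: "n \<in> M \<Longrightarrow> (\<And>u. u \<in> \<Omega> \<Longrightarrow> n u = u) \<Longrightarrow> n = (\<lambda>u\<in>\<Omega>. u)"
  by (rule extensionalityI[OF Bij_imp_extensional[OF M_Bij]]) auto

lemma perm_conj_eq_G_group: "g \<in> G \<Longrightarrow> n \<in> G \<Longrightarrow>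
    perm_conj \<Omega> g n = g \<otimes>\<^bsub>G_group\<^esub> n \<otimes>\<^bsub>G_group\<^esub> inv\<^bsub>G_group\<^esub> g"
  using group.subgroupE(3,4)[OF group_G_group group.subgroup_self[OF group_G_group]]
  by (auto simp: mult_G_group inv_G_group perm_conj_def compose_def Bij_inv_into_mem[OF G_Bij]
      intro!: restrict_ext)

lemma perm_conj_M: "g \<in> G \<Longrightarrow> n \<in> M \<Longrightarrow> perm_conj \<Omega> g n \<in> M"
  using normal.inv_op_closed2[OF M_normal] perm_conj_eq_G_group M_subset_G by auto

lemma M_coordinatewise:
  assumes "m \<in> M"
  obtains g where "m = wr_elem D l g id" "\<forall>j<l. restrict (g j) D \<in> component D l M j"
  using assms M_components unfolding prod_components_def by blast

lemma M_apply_coord: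
  "m \<in> M \<Longrightarrow> u \<in> \<Omega> \<Longrightarrow> v \<in> \<Omega> \<Longrightarrow> u q = v q \<Longrightarrow> m u q = m v q"
  by (erule M_coordinatewise) (simp add: wr_elem_def)

lemma id_in_M: "(\<lambda>u\<in>\<Omega>. u) \<in> M"
  using subgroup.one_closed[OF normal_imp_subgroup[OF M_normal]] by (simp add: Sub_def BijGroup_def)

lemma id_in_component: "j < l \<Longrightarrow> restrict id D \<in> component D l M j"
  unfolding component_def
proof (intro CollectI exI conjI)
  have "wr_elem D l (\<lambda>_. id) id = (\<lambda>u\<in>\<Omega>. u)"
    by (auto simp: wr_elem_def restrict_Omega)
  then show "wr_elem D l (\<lambda>_. id) id \<in> M" using id_in_M by simp
qed (auto simp: wr_data_def permutes_id)

definition coord_part :: "nat \<Rightarrow> ((nat \<Rightarrow> 'a) \<Rightarrow> (nat \<Rightarrow> 'a)) \<Rightarrow> ((nat \<Rightarrow> 'a) \<Rightarrow> (nat \<Rightarrow> 'a))"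
  where "coord_part j m = (\<lambda>u\<in>\<Omega>. \<lambda>i\<in>{..<l}. if i = j then m u i else u i)"

lemma coord_part_apply:
  "u \<in> \<Omega> \<Longrightarrow> q < l \<Longrightarrow> coord_part j m u q = (if q = j then m u q else u q)"
  by (simp add: coord_part_def)

lemma moves_only_coord_part: "moves_only D l j (coord_part j m)"
  by (simp add: moves_only_def coord_part_apply)

text \<open>This is where normality of the inclusion \<open>G \<le> W\<close>, i.e.\ \<open>M = prod_components D l M\<close>, is used.\<close>
lemma coord_part_M: "m \<in> M \<Longrightarrow> j < l \<Longrightarrow> coord_part j m \<in> M"
proof (erule M_coordinatewise)
  fix g assume "j < l" and m: "m = wr_elem D l g id" "\<forall>j<l. restrict (g j) D \<in> component D l M j"
  have "coord_part j m = wr_elem D l (\<lambda>i. if i = j then g j else id) id"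
    unfolding coord_part_def m(1) wr_elem_def by (auto intro!: ext)
  also have "\<dots> \<in> prod_components D l M"
    unfolding prod_components_def using m(2) id_in_component by auto
  finally show ?thesis using M_components by simp
qed

lemma coord_part_fixed: "u \<in> \<Omega> \<Longrightarrow> m u = u \<Longrightarrow> coord_part j m u = u"
proof -
  assume "u \<in> \<Omega>" "m u = u"
  then have "(\<lambda>i\<in>{..<l}. if i = j then m u i else u i) = (\<lambda>i\<in>{..<l}. u i)"
    by (intro restrict_ext) simp
  with \<open>u \<in> \<Omega>\<close> show ?thesis by (simp add: coord_part_def restrict_Omega)
qed

lemma fixed_if_coord_parts_fixed:
  assumes "m \<in> M" "u \<in> \<Omega>" "\<And>j. j < l \<Longrightarrow> coord_part j m u = u"
  shows "m u = u"
proof (rule Omega_eqI[OF Bij_apply[OF M_Bij[OF assms(1)] assms(2)] assms(2)])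
  fix q assume "q < l"
  then show "m u q = u q" using assms(3)[of q] coord_part_apply[OF assms(2), of q q m] by simp
qed

definition coord_stab :: "nat \<Rightarrow> (nat \<Rightarrow> 'a) \<Rightarrow> ((nat \<Rightarrow> 'a) \<Rightarrow> (nat \<Rightarrow> 'a)) set" where
  "coord_stab i v = {n \<in> M. moves_only D l i n \<and> n v = v}"

lemma coord_part_coord_stab: "m \<in> M \<Longrightarrow> i < l \<Longrightarrow> v \<in> \<Omega> \<Longrightarrow> m v = v \<Longrightarrow> coord_part i m \<in> coord_stab i v"
  unfolding coord_stab_def using coord_part_M moves_only_coord_part coord_part_fixed by blast

lemma finite_coord_stab: "finite (coord_stab i v)"
proof (rule finite_subset)
  show "coord_stab i v \<subseteq> \<Omega> \<rightarrow>\<^sub>E \<Omega>"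
    unfolding coord_stab_def using M_Bij by (auto simp: Bij_def bij_betw_def PiE_def)
  show "finite (\<Omega> \<rightarrow>\<^sub>E \<Omega>)"
    using finite_D by (simp add: Omega_def finite_PiE)
qed

lemma coord_stab_fixes:
  assumes "n \<in> coord_stab i v" "i < l" "v \<in> \<Omega>" "u \<in> \<Omega>" "u i = v i"
  shows "n u = u"
proof -
  have n: "n \<in> M" "moves_only D l i n" "n v = v" using assms(1) unfolding coord_stab_def by auto
  show ?thesis
  proof (rule Omega_eqI[OF Bij_apply[OF M_Bij[OF n(1)] assms(4)] assms(4)])
    fix q assume "q < l"
    then show "n u q = u q"
      using n M_apply_coord[OF n(1) assms(4,3,5)] assms(4,5) unfolding moves_only_def
      by (cases "q = i") auto
  qed
qed

lemma perm_conj_coord_stab: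
  assumes m: "m \<in> M" and v: "v \<in> \<Omega>" and n: "n \<in> coord_stab i v"
  shows "perm_conj \<Omega> m n \<in> coord_stab i (m v)"
proof -
  have mB: "m \<in> Bij \<Omega>" using M_Bij[OF m] .
  have nM: "n \<in> M" and n_only: "moves_only D l i n" and nv: "n v = v"
    using n unfolding coord_stab_def by auto
  have "moves_only D l i (perm_conj \<Omega> m n)"
    unfolding moves_only_def
  proof (intro ballI allI impI)
    fix u p assume u: "u \<in> \<Omega>" and p: "p < l" "p \<noteq> i"
    define z where "z = inv_into \<Omega> m u"
    have z: "z \<in> \<Omega>" unfolding z_def using Bij_inv_into_mem[OF mB u] .
    have "n z p = z p" using n_only z p unfolding moves_only_def by blast
    then have "m (n z) p = m z p" using M_apply_coord[OF m Bij_apply[OF M_Bij[OF nM] z] z] by simp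
    then show "perm_conj \<Omega> m n u p = u p"
      using u Bij_inv_into_right[OF mB u] by (simp add: perm_conj_def z_def)
  qed
  then show ?thesis
    using perm_conj_M[OF subsetD[OF M_subset_G m] nM] perm_conj_apply_image[OF mB v] nv
    unfolding coord_stab_def by simp
qed

text \<open>By transitivity of \<open>M\<close>, conjugation injects every \<open>coord_stab i v\<close> into every other one.\<close>
lemma card_coord_stab_le:
  assumes v: "v \<in> \<Omega>" and w: "w \<in> \<Omega>"
  shows "card (coord_stab i v) \<le> card (coord_stab i w)"
proof -
  obtain m where m: "m \<in> M" "m v = w" using M_transitive v w unfolding transitive_on_def by blast
  have mB: "m \<in> Bij \<Omega>" using M_Bij[OF m(1)] .
  have "inj_on (perm_conj \<Omega> m) (coord_stab i v)"
  proof (rule inj_onI)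
    fix n1 n2 assume n: "n1 \<in> coord_stab i v" "n2 \<in> coord_stab i v"
      and eq: "perm_conj \<Omega> m n1 = perm_conj \<Omega> m n2"
    have nB: "n1 \<in> Bij \<Omega>" "n2 \<in> Bij \<Omega>" using n M_Bij unfolding coord_stab_def by auto
    show "n1 = n2"
    proof (rule extensionalityI[OF Bij_imp_extensional[OF nB(1)] Bij_imp_extensional[OF nB(2)]])
      fix z assume z: "z \<in> \<Omega>"
      have "m (n1 z) = m (n2 z)"
        using fun_cong[OF eq, of "m z"] perm_conj_apply_image[OF mB z] by simp
      then show "n1 z = n2 z" using Bij_apply_eq_iff[OF mB Bij_apply[OF nB(1) z] Bij_apply[OF nB(2) z]] by simp
    qed
  qed
  moreover have "perm_conj \<Omega> m ` coord_stab i v \<subseteq> coord_stab i w"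
    using perm_conj_coord_stab[OF m(1) v] m(2) by blast
  ultimately show ?thesis using card_inj_on_le finite_coord_stab by blast
qed

lemma coord_stab_eq_if_subset:
  "v \<in> \<Omega> \<Longrightarrow> w \<in> \<Omega> \<Longrightarrow> coord_stab i v \<subseteq> coord_stab i w \<Longrightarrow> coord_stab i v = coord_stab i w"
  using card_subset_eq[OF finite_coord_stab] card_coord_stab_le by (metis antisym)

lemma moves_only_subgroup: "subgroup {g \<in> G. moves_only D l j g} G_group"
proof (rule group.subgroupI[OF group_G_group])
  show "{g \<in> G. moves_only D l j g} \<noteq> {}"
    using subgroup.one_closed[OF G_subgroup] by (auto simp: moves_only_def BijGroup_def)
next
  fix a assume a: "a \<in> {g \<in> G. moves_only D l j g}"
  have "moves_only D l j (\<lambda>u\<in>\<Omega>. inv_into \<Omega> a u)"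
    unfolding moves_only_def
  proof (intro ballI allI impI)
    fix u p assume u: "u \<in> \<Omega>" and p: "p < l" "p \<noteq> j"
    have "a (inv_into \<Omega> a u) p = inv_into \<Omega> a u p"
      using a Bij_inv_into_mem[OF G_Bij u] p unfolding moves_only_def by blast
    then show "(\<lambda>u\<in>\<Omega>. inv_into \<Omega> a u) u p = u p"
      using u a Bij_inv_into_right[OF G_Bij u] by simp
  qed
  then show "inv\<^bsub>G_group\<^esub> a \<in> {g \<in> G. moves_only D l j g}"
    using a group.inv_closed[OF group_G_group] inv_G_group by force
next
  fix a b assume a: "a \<in> {g \<in> G. moves_only D l j g}" and b: "b \<in> {g \<in> G. moves_only D l j g}"
  then have "moves_only D l j (compose \<Omega> a b)"
    using Bij_apply[OF G_Bij] by (simp add: moves_only_def compose_def)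
  moreover have "compose \<Omega> a b \<in> G"
    using subgroup.m_closed[OF G_subgroup, of a b] a b G_Bij by (simp add: BijGroup_def)
  ultimately show "a \<otimes>\<^bsub>G_group\<^esub> b \<in> {g \<in> G. moves_only D l j g}"
    using a b mult_G_group by simp
qed auto

lemma M_not_moves_only:
  assumes "j < l"
  obtains m where "m \<in> M" "\<not> moves_only D l j m"
proof -
  define i where "i = (if j = 0 then 1 else 0::nat)"
  have i: "i < l" "i \<noteq> j" using l_ge_2 unfolding i_def by auto
  obtain d1 d2 where d: "d1 \<in> D" "d2 \<in> D" "d1 \<noteq> d2"
    using card_D by (auto simp: numeral_2_eq_2 card_le_Suc_iff)
  define u where "u = (\<lambda>q\<in>{..<l}. d1)"
  define u' where "u' = (\<lambda>q\<in>{..<l}. if q = i then d2 else d1)"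
  have "u \<in> \<Omega>" "u' \<in> \<Omega>" using d unfolding u_def u'_def Omega_def by auto
  then obtain m where "m \<in> M" "m u = u'" using M_transitive unfolding transitive_on_def by blast
  moreover have "m u i \<noteq> u i" using \<open>m u = u'\<close> i d unfolding u_def u'_def by simp
  ultimately show thesis using that i \<open>u \<in> \<Omega>\<close> unfolding moves_only_def by blast
qed

text \<open>If the top group fixes coordinate \<open>j\<close>, then the elements of \<open>M\<close> supported on coordinate
  \<open>j\<close> form a normal subgroup of \<open>G\<close> inside \<open>M\<close>; it is proper by transitivity of \<open>M\<close>.\<close>
lemma moves_only_invariant_coord_eq_id:
  assumes j: "j < l" and inv: "\<And>g' h. wr_data D l g' h \<Longrightarrow> wr_elem D l g' h \<in> G \<Longrightarrow> h j = j"
    and k: "k \<in> M" "moves_only D l j k"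
  shows "k = (\<lambda>u\<in>\<Omega>. u)"
proof -
  let ?N = "{m \<in> M. moves_only D l j m}"
  have "?N = M \<inter> {g \<in> G. moves_only D l j g}" using M_subset_G by blast
  then have "subgroup ?N G_group"
    using group.subgroups_Inter_pair[OF group_G_group] normal_imp_subgroup[OF M_normal]
      moves_only_subgroup by simp
  moreover have "g \<otimes>\<^bsub>G_group\<^esub> n \<otimes>\<^bsub>G_group\<^esub> inv\<^bsub>G_group\<^esub> g \<in> ?N"
    if g: "g \<in> G" and n: "n \<in> ?N" for g n
  proof -
    obtain g' h where gh: "wr_data D l g' h" "g = wr_elem D l g' h"
      using G_wreath g unfolding Wr_def by blast
    have "n \<in> \<Omega> \<rightarrow> \<Omega>" using n M_Bij Bij_imp_funcset by blast
    moreover have "h j = j" using inv gh g by simp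
    ultimately have "moves_only D l j (perm_conj \<Omega> g n)"
      using perm_conj_moves_only[OF gh G_Bij[OF g], of n j] n by simp
    then have "perm_conj \<Omega> g n \<in> ?N" using g perm_conj_M n by simp
    then show ?thesis using perm_conj_eq_G_group g n M_subset_G by auto
  qed
  ultimately have "?N \<lhd> G_group" by (simp add: group.normal_inv_iff[OF group_G_group])
  moreover obtain m where "m \<in> M" "\<not> moves_only D l j m" using M_not_moves_only[OF j] .
  ultimately have "?N = {\<one>\<^bsub>BijGroup \<Omega>\<^esub>}"
    using M_minimal_normal unfolding minimal_normal_def by blast
  then show ?thesis using k by (auto simp: BijGroup_def)
qed

end

locale two_arc_transitive_product_action = product_action D l G M
  for D :: "'a set" and l G M +
  fixes E :: "(nat \<Rightarrow> 'a) \<Rightarrow> (nat \<Rightarrow> 'a) \<Rightarrow> bool"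
  assumes simple: "simple_graph (Omega D l) E" and connected: "connected_graph (Omega D l) E"
    and G_automorphisms: "automorphisms_of G (Omega D l) E"
    and M_not_regular: "\<not> regular_on M (Omega D l)"
    and two_arc_transitive: "two_arc_transitive G (Omega D l) E"
begin

lemma E_Omega: "E v w \<Longrightarrow> v \<in> \<Omega> \<and> w \<in> \<Omega>"
  using simple unfolding simple_graph_def by blast

lemma E_sym: "E v w \<Longrightarrow> E w v"
  using simple unfolding simple_graph_def by blast

lemma G_preserves_E: "g \<in> G \<Longrightarrow> v \<in> \<Omega> \<Longrightarrow> w \<in> \<Omega> \<Longrightarrow> E (g v) (g w) \<longleftrightarrow> E v w"
  using G_automorphisms unfolding automorphisms_of_def by blast

lemma stab_two_transitive_nbhd:
  assumes "E v a" "E v b" "a \<noteq> b" "E v c" "E v d" "c \<noteq> d"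
  obtains g where "g \<in> G" "g v = v" "g a = c" "g b = d"
proof -
  have "(a, v, b) \<in> two_arcs \<Omega> E" "(c, v, d) \<in> two_arcs \<Omega> E"
    unfolding two_arcs_def using assms E_Omega E_sym by auto
  then show thesis using two_arc_transitive that unfolding two_arc_transitive_def by fastforce
qed

lemma M_stab_moves_nbhd_transfer:
  assumes u: "u \<in> \<Omega>" and v: "v \<in> \<Omega>" and n: "n \<in> M" "n u = u" and a: "E u a" "n a \<noteq> a"
  shows "\<exists>n'\<in>M. n' v = v \<and> (\<exists>b. E v b \<and> n' b \<noteq> b)"
proof -
  obtain m where m: "m \<in> M" "m u = v" using M_transitive u v unfolding transitive_on_def by blast
  have mB: "m \<in> Bij \<Omega>" using M_Bij[OF m(1)] .
  have aS: "a \<in> \<Omega>" using E_Omega[OF a(1)] by blast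
  have "perm_conj \<Omega> m n \<in> M" using perm_conj_M M_subset_G m(1) n(1) by blast
  moreover have "perm_conj \<Omega> m n v = v" using perm_conj_apply_image[OF mB u] m(2) n(2) by simp
  moreover have "E v (m a)" using G_preserves_E[of m u a] m M_subset_G u aS a(1) by auto
  moreover have "perm_conj \<Omega> m n (m a) \<noteq> m a"
    using perm_conj_apply_image[OF mB aS] Bij_apply_eq_iff[OF mB Bij_apply[OF M_Bij[OF n(1)] aS] aS] a(2)
    by simp
  ultimately show ?thesis by blast
qed

text \<open>Otherwise a nontrivial point stabiliser in \<open>M\<close> would fix, along the connected graph, every vertex.\<close>
lemma M_stab_moves_nbhd:
  assumes v: "v \<in> \<Omega>"
  obtains n a where "n \<in> M" "n v = v" "E v a" "n a \<noteq> a"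
proof (rule ccontr)
  assume none: "\<not> thesis"
  note stab_moves = that
  obtain n x where n: "n \<in> M" "x \<in> \<Omega>" "n x = x" "n \<noteq> (\<lambda>u\<in>\<Omega>. u)"
    using M_not_regular M_transitive unfolding regular_on_def by (auto simp: BijGroup_def)
  have "n y = y" if "y \<in> \<Omega>" for y
  proof (rule connected_graph_induct[OF connected n(2) that, where P = "\<lambda>y. n y = y"])
    fix u w assume "n u = u" "E u w"
    show "n w = w"
    proof (rule ccontr)
      assume "n w \<noteq> w"
      then obtain n' b where "n' \<in> M" "n' v = v" "E v b" "n' b \<noteq> b"
        using M_stab_moves_nbhd_transfer[OF _ v n(1) \<open>n u = u\<close> \<open>E u w\<close>] E_Omega[OF \<open>E u w\<close>]
        by blast
      then show False using none stab_moves by blast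
    qed
  qed (use n in simp)
  then show False using M_eq_id n by blast
qed

lemma M_stab_transitive_nbhd:
  assumes c: "E v c" and d: "E v d"
  obtains m where "m \<in> M" "m v = v" "m c = d"
proof (cases "c = d")
  case True
  then show thesis using that id_in_M E_Omega[OF c] by auto
next
  case False
  have v: "v \<in> \<Omega>" using E_Omega[OF c] by blast
  obtain n a where n: "n \<in> M" "n v = v" "E v a" "n a \<noteq> a" using M_stab_moves_nbhd[OF v] .
  have aS: "a \<in> \<Omega>" using E_Omega[OF n(3)] by blast
  have "E v (n a)" using G_preserves_E[of n v a] n M_subset_G v aS by auto
  moreover have "a \<noteq> n a" using n(4) by simp
  ultimately obtain g where g: "g \<in> G" "g v = v" "g a = c" "g (n a) = d"
    by (rule stab_two_transitive_nbhd[OF n(3) _ _ c d False])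
  have gB: "g \<in> Bij \<Omega>" using G_Bij[OF g(1)] .
  show thesis
  proof (rule that)
    show "perm_conj \<Omega> g n \<in> M" using perm_conj_M[OF g(1) n(1)] .
    show "perm_conj \<Omega> g n v = v" using perm_conj_apply_image[OF gB v] g(2) n(2) by simp
    show "perm_conj \<Omega> g n c = d" using perm_conj_apply_image[OF gB aS] g(3,4) by simp
  qed
qed

text \<open>A point stabiliser in \<open>M\<close> moves some neighbour \<open>a\<close> in a single coordinate, so two neighbours
  are Hamming-adjacent; 2-arc-transitivity and invariance of Hamming distance under \<open>W\<close> spread this
  to all pairs of neighbours.\<close>
lemma nbhd_hamming_adjacent:
  assumes c: "E v c" and d: "E v d" and "c \<noteq> d"
  shows "hamming_adjacent l c d"
proof -
  have v: "v \<in> \<Omega>" using E_Omega[OF c] by blast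
  obtain n a where n: "n \<in> M" "n v = v" "E v a" "n a \<noteq> a" using M_stab_moves_nbhd[OF v] .
  have aS: "a \<in> \<Omega>" using E_Omega[OF n(3)] by blast
  obtain j where j: "j < l" "n a j \<noteq> a j"
    using Omega_eqI[OF Bij_apply[OF M_Bij[OF n(1)] aS] aS] n(4) by blast
  define b where "b = coord_part j n a"
  have "coord_part j n \<in> G" using coord_part_M[OF n(1) j(1)] M_subset_G by blast
  then have "E (coord_part j n v) b"
    unfolding b_def using G_preserves_E v aS n(3) by blast
  then have "E v b" using coord_part_fixed[of v n j, OF v n(2)] by simp
  moreover have "hamming_adjacent l a b"
    unfolding hamming_adjacent_def b_def using j aS by (auto simp: coord_part_apply)
  moreover have "a \<noteq> b" using calculation(2) unfolding hamming_adjacent_def by blast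
  ultimately obtain g where g: "g \<in> G" "g a = c" "g b = d"
    using stab_two_transitive_nbhd[OF n(3) _ _ c d \<open>c \<noteq> d\<close>] by blast
  obtain g' h where gh: "wr_data D l g' h" "g = wr_elem D l g' h"
    using G_wreath g(1) unfolding Wr_def by blast
  have "b \<in> \<Omega>" using E_Omega[OF \<open>E v b\<close>] by blast
  from wr_elem_hamming_adjacent[OF gh(1) aS this \<open>hamming_adjacent l a b\<close>]
  show ?thesis using gh(2) g(2,3) by simp
qed

definition nbhd_on_line :: "(nat \<Rightarrow> 'a) \<Rightarrow> nat \<Rightarrow> bool" where
  "nbhd_on_line v j \<longleftrightarrow> (\<forall>a b. E v a \<longrightarrow> E v b \<longrightarrow> (\<forall>i<l. i \<noteq> j \<longrightarrow> a i = b i))"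

lemma exists_nbhd_on_line:
  assumes v: "v \<in> \<Omega>"
  shows "\<exists>j<l. nbhd_on_line v j"
proof -
  obtain n a where n: "n \<in> M" "n v = v" "E v a" "n a \<noteq> a" using M_stab_moves_nbhd[OF v] .
  have aS: "a \<in> \<Omega>" using E_Omega[OF n(3)] by blast
  have b: "E v (n a)" using G_preserves_E[of n v a] n M_subset_G v aS by auto
  obtain j where j: "j < l" "a j \<noteq> n a j" and off_j: "\<forall>p<l. p \<noteq> j \<longrightarrow> a p = n a p"
    using nbhd_hamming_adjacent[OF n(3) b] n(4) unfolding hamming_adjacent_def by auto
  have off_line: "c i = a i" if c: "E v c" and i: "i < l" "i \<noteq> j" for c i
  proof (cases "c = a \<or> c = n a")
    case True
    then show ?thesis using off_j i by auto
  next
    case False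
    then show ?thesis
      using hamming_adjacent_both[OF j off_j _ _ i] nbhd_hamming_adjacent[OF c] n(3) b by blast
  qed
  then have "nbhd_on_line v j" unfolding nbhd_on_line_def by (metis (no_types))
  then show ?thesis using j(1) by blast
qed

definition line_coord :: "(nat \<Rightarrow> 'a) \<Rightarrow> nat" where
  "line_coord v = (SOME j. j < l \<and> nbhd_on_line v j)"

lemma line_coord: "v \<in> \<Omega> \<Longrightarrow> line_coord v < l \<and> nbhd_on_line v (line_coord v)"
  unfolding line_coord_def using someI_ex[OF exists_nbhd_on_line] by blast

lemma coord_stab_subset_along_edge:
  assumes "nbhd_on_line v j" "E v w" "i < l" "i \<noteq> j"
  shows "coord_stab i v \<subseteq> coord_stab i w"
proof
  fix n assume n: "n \<in> coord_stab i v"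
  have v: "v \<in> \<Omega>" and w: "w \<in> \<Omega>" using E_Omega[OF assms(2)] by auto
  have "E v (n w)" using G_preserves_E[of n v w] n M_subset_G v w assms(2)
    unfolding coord_stab_def by auto
  then have "w i = n w i" using assms unfolding nbhd_on_line_def by blast
  moreover have nM: "n \<in> M" and n_only: "moves_only D l i n" using n unfolding coord_stab_def by auto
  ultimately have "n w q = w q" if "q < l" for q
    using that w unfolding moves_only_def by (cases "q = i") auto
  then have "n w = w" by (rule Omega_eqI[OF Bij_apply[OF M_Bij[OF nM] w] w])
  then show "n \<in> coord_stab i w" using n unfolding coord_stab_def by auto
qed

lemma nbhd_singleton_if_coord_stabs_eq:
  assumes v: "v \<in> \<Omega>" and w: "w \<in> \<Omega>" and stabs: "\<forall>i<l. coord_stab i v = coord_stab i w"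
    and "E v w" "E v c"
  shows "c = w"
proof -
  obtain m where m: "m \<in> M" "m v = v" "m w = c" using M_stab_transitive_nbhd[OF \<open>E v w\<close> \<open>E v c\<close>] .
  have "m w = w"
  proof (rule fixed_if_coord_parts_fixed[OF m(1) w])
    fix i assume i: "i < l"
    then have "coord_part i m \<in> coord_stab i w" using coord_part_coord_stab[OF m(1) i v m(2)] stabs by simp
    then show "coord_part i m w = w" using coord_stab_fixes[OF _ i w w] by blast
  qed
  then show ?thesis using m(3) by simp
qed

text \<open>If the line coordinates at the ends of an edge differed, the two ends would have the same
  coordinate stabilisers, so by the previous lemma the edge would be a whole component.\<close>
lemma line_coord_edge:
  assumes e: "E v w"
  shows "line_coord v = line_coord w"
proof (rule ccontr)
  assume ne: "line_coord v \<noteq> line_coord w"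
  have v: "v \<in> \<Omega>" and w: "w \<in> \<Omega>" using E_Omega[OF e] by auto
  have stabs: "\<forall>i<l. coord_stab i v = coord_stab i w"
  proof (intro allI impI)
    fix i assume i: "i < l"
    show "coord_stab i v = coord_stab i w"
    proof (cases "i = line_coord v")
      case False
      have "nbhd_on_line v (line_coord v)" using line_coord[OF v] ..
      from coord_stab_subset_along_edge[OF this e i False]
      show ?thesis by (rule coord_stab_eq_if_subset[OF v w])
    next
      case True
      then have "i \<noteq> line_coord w" using ne by simp
      moreover have "nbhd_on_line w (line_coord w)" using line_coord[OF w] ..
      ultimately have "coord_stab i w \<subseteq> coord_stab i v"
        using coord_stab_subset_along_edge[OF _ E_sym[OF e] i] by blast
      from coord_stab_eq_if_subset[OF w v this] show ?thesis ..
    qed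
  qed
  have "\<forall>c. E v c \<longrightarrow> c = w" using nbhd_singleton_if_coord_stabs_eq[OF v w stabs e] by blast
  moreover have "\<forall>c. E w c \<longrightarrow> c = v"
    using nbhd_singleton_if_coord_stabs_eq[OF w v _ E_sym[OF e]] stabs by simp
  ultimately have "\<Omega> \<subseteq> {v, w}" by (rule connected_graph_isolated_edge[OF connected v, OF e])
  then have "card \<Omega> \<le> card {v, w}" by (rule card_mono[rotated]) simp
  also have "\<dots> \<le> 2" by (simp add: card_insert_if)
  finally show False using card_Omega_gt_2 by simp
qed

lemma line_coord_const: "x \<in> \<Omega> \<Longrightarrow> y \<in> \<Omega> \<Longrightarrow> line_coord y = line_coord x"
  by (rule connected_graph_induct[OF connected, where P = "\<lambda>y. line_coord y = line_coord x"])
    (simp_all add: line_coord_edge[symmetric])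

lemma coord_stab_off_line_eq_id:
  assumes u: "u \<in> \<Omega>" and i: "i < l" "i \<noteq> line_coord u" and n: "n \<in> coord_stab i u"
  shows "n = (\<lambda>x\<in>\<Omega>. x)"
proof -
  have "n \<in> coord_stab i y" if "y \<in> \<Omega>" for y
  proof (rule connected_graph_induct[OF connected u that, where P = "\<lambda>y. n \<in> coord_stab i y", OF n])
    fix a b assume "n \<in> coord_stab i a" "E a b"
    moreover have "a \<in> \<Omega>" using E_Omega[OF \<open>E a b\<close>] by blast
    moreover have "i \<noteq> line_coord a" using line_coord_const[OF u \<open>a \<in> \<Omega>\<close>] i(2) by simp
    ultimately show "n \<in> coord_stab i b"
      using coord_stab_subset_along_edge[OF _ \<open>E a b\<close> i(1)] line_coord by blast
  qed
  then show ?thesis using M_eq_id n unfolding coord_stab_def by blast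
qed

lemma exists_nontrivial_coord_stab:
  obtains x k where "x \<in> \<Omega>" "k \<in> coord_stab (line_coord x) x" "k \<noteq> (\<lambda>u\<in>\<Omega>. u)"
proof -
  obtain n x where n: "n \<in> M" "x \<in> \<Omega>" "n x = x" "n \<noteq> (\<lambda>u\<in>\<Omega>. u)"
    using M_not_regular M_transitive unfolding regular_on_def by (auto simp: BijGroup_def)
  obtain y where y: "y \<in> \<Omega>" "n y \<noteq> y" using M_eq_id[OF n(1)] n(4) by blast
  obtain q where q: "q < l" "coord_part q n y \<noteq> y"
    using fixed_if_coord_parts_fixed[OF n(1) y(1)] y(2) by blast
  have stab: "coord_part q n \<in> coord_stab q x" using coord_part_coord_stab[OF n(1) q(1) n(2,3)] .
  have nontriv: "coord_part q n \<noteq> (\<lambda>u\<in>\<Omega>. u)" using q(2) y(1) by auto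
  then have "q = line_coord x" using coord_stab_off_line_eq_id[OF n(2) q(1) _ stab] by blast
  then show thesis using that[OF n(2) _ nontriv] stab by simp
qed

text \<open>Conjugation by \<open>wr_elem D l g' h\<close> carries elements supported on coordinate \<open>i\<close> to elements
  supported on \<open>h i\<close>, and nontrivial ones in a point stabiliser only live on the line coordinate.\<close>
lemma G_fixes_line_coord:
  assumes x: "x \<in> \<Omega>" and gh: "wr_data D l g' h" "wr_elem D l g' h \<in> G"
  shows "h (line_coord x) = line_coord x"
proof (rule ccontr)
  assume ne: "h (line_coord x) \<noteq> line_coord x"
  obtain x0 k where x0: "x0 \<in> \<Omega>" and k: "k \<in> coord_stab (line_coord x0) x0" "k \<noteq> (\<lambda>u\<in>\<Omega>. u)"
    by (rule exists_nontrivial_coord_stab)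
  define j where "j = line_coord x"
  have j: "line_coord x0 = j" "j < l" using line_coord_const[OF x x0] line_coord[OF x] by (auto simp: j_def)
  define g where "g = wr_elem D l g' h"
  have g: "g \<in> G" and gB: "g \<in> Bij \<Omega>" using gh G_Bij unfolding g_def by auto
  have kM: "k \<in> M" and k_only: "moves_only D l j k" and kx0: "k x0 = x0"
    using k j unfolding coord_stab_def by auto
  have gx0: "g x0 \<in> \<Omega>" using Bij_apply[OF gB x0] .
  have "h j < l" using gh(1) j(2) permutes_in_image unfolding wr_data_def by fastforce
  moreover have "h j \<noteq> line_coord (g x0)" using line_coord_const[OF x gx0] ne by (simp add: j_def)
  moreover have "perm_conj \<Omega> g k \<in> coord_stab (h j) (g x0)"
    unfolding coord_stab_def
    using perm_conj_M[OF g kM] perm_conj_moves_only[OF gh(1) g_def gB _ k_only]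
      Bij_imp_funcset[OF M_Bij[OF kM]] perm_conj_apply_image[OF gB x0] kx0 by simp
  ultimately have conj_id: "perm_conj \<Omega> g k = (\<lambda>u\<in>\<Omega>. u)"
    using coord_stab_off_line_eq_id[OF gx0] by blast
  have "g (k u) = g u" if "u \<in> \<Omega>" for u
    using fun_cong[OF conj_id, of "g u"] perm_conj_apply_image[OF gB that] Bij_apply[OF gB that] by simp
  then have "k = (\<lambda>u\<in>\<Omega>. u)"
    using M_eq_id[OF kM] Bij_apply_eq_iff[OF gB Bij_apply[OF M_Bij[OF kM]]] by blast
  then show False using k(2) by simp
qed

end

theorem corollary3p5:
  fixes D :: "'a set" and l k :: nat
    and G M :: "((nat \<Rightarrow> 'a) \<Rightarrow> (nat \<Rightarrow> 'a)) set"
    and T :: "nat \<Rightarrow> ((nat \<Rightarrow> 'a) \<Rightarrow> (nat \<Rightarrow> 'a)) set"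
    and E :: "(nat \<Rightarrow> 'a) \<Rightarrow> (nat \<Rightarrow> 'a) \<Rightarrow> bool"
  assumes "finite D" and "card D \<ge> 2" and "l \<ge> 2"
    and "subgroup G (BijGroup (Omega D l))" and "G \<subseteq> Wr D l"
    and "minimal_normal M G (Omega D l)"
    and "transitive_on M (Omega D l)"
    and "k \<ge> 1"
    and "\<forall>i<k. simple_group (Sub (Omega D l) (T i))"
    and "\<forall>i<k. \<forall>j<k. Sub (Omega D l) (T i) \<cong> Sub (Omega D l) (T j)"
    and "internal_direct_product (Omega D l) M k T"
    and "simple_graph (Omega D l) E" and "connected_graph (Omega D l) E"
    and "automorphisms_of G (Omega D l) E"
    and "\<not> regular_on M (Omega D l)"
    and "normal_inclusion D l M"
  shows "\<not> two_arc_transitive G (Omega D l) E"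
proof
  assume "two_arc_transitive G (Omega D l) E"
  then interpret two_arc_transitive_product_action D l G M E
    by (intro two_arc_transitive_product_action.intro product_action.intro
        two_arc_transitive_product_action_axioms.intro)
      (use assms in \<open>simp_all add: normal_inclusion_def\<close>)
  obtain x k where x: "x \<in> \<Omega>" and k: "k \<in> coord_stab (line_coord x) x" "k \<noteq> (\<lambda>u\<in>\<Omega>. u)"
    by (rule exists_nontrivial_coord_stab)
  have "k = (\<lambda>u\<in>\<Omega>. u)"
  proof (rule moves_only_invariant_coord_eq_id)
    show "line_coord x < l" using line_coord[OF x] ..
    show "h (line_coord x) = line_coord x" if "wr_data D l g' h" "wr_elem D l g' h \<in> G" for g' h
      using G_fixes_line_coord[OF x that] .
  qed (use k in \<open>auto simp: coord_stab_def\<close>)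
  with k(2) show False ..
qed

end
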